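(* Assume $N,L\to\infty$ with $N/L\to0$, $d=d(L)\to0$, $dL\to\infty$ and $N/(dL)\to\gamma\in[0,\infty)$. Then for every $n\in\mathbb N$, $$\lim\ \pi_{L,N}[\tilde\eta_1=n]=\frac{\gamma^{n-1}}{(1+\gamma)^n},$$ i.e. the law of $\tilde\eta_1$ under $\pi_{L,N}$ converges to the geometric distribution on $\{1,2,\dots\}$ with success parameter $\frac1{1+\gamma}$ (for $\gamma=0$, the point mass at $1$).
   Context: Inclusion process: $\Omega_{L,N}=\{\eta\in\mathbb N_0^L:\sum_x\eta_x=N\}$, generator $\mathfrak L_{L,N}f(\eta)=\sum_{x\ne y}\eta_x(d+\eta_y)[f(\eta^{x,y})-f(\eta)]$, $\eta^{x,y}=\eta-e^x+e^y$. For $d>0$ its unique invariant distribution is $\pi_{L,N}[\eta]=\frac1{Z_{L,N}}\prod_{x=1}^Lw_L(\eta_x)$ with $w_L(n)=\frac{\Gamma(n+d)}{n!\,\Gamma(d)}$ and $Z_{L,N}=\frac{\Gamma(N+dL)}{N!\,\Gamma(dL)}$. Size-biased marginal: given $\eta$, choose a site $x$ with probability $\eta_x/N$ and set $\tilde\eta_1=\eta_x$; $\pi_{L,N}[\tilde\eta_1=n]$ denotes the probability of this event when $\eta\sim\pi_{L,N}$, i.e. $\pi_{L,N}[\tilde\eta_1=n]=\frac LNn\,w_L(n)\frac{Z_{L-1,N-n}}{Z_{L,N}}$. *)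

theory Defs
  imports "HOL-Analysis.Analysis"
begin

definition ip_w :: "real \<Rightarrow> nat \<Rightarrow> real" where
  "ip_w d n = Gamma (real n + d) / (fact n * Gamma d)"

definition ip_Z :: "real \<Rightarrow> nat \<Rightarrow> nat \<Rightarrow> real" where
  "ip_Z d L N = Gamma (real N + d * real L) / (fact N * Gamma (d * real L))"

text \<open>Size-biased marginal pi_{L,N}[tilde eta_1 = n] = (L/N) n w_L(n) Z_{L-1,N-n} / Z_{L,N};
  it is 0 when n > N (no site can carry more than N particles).\<close>
definition ip_sizebiased :: "real \<Rightarrow> nat \<Rightarrow> nat \<Rightarrow> nat \<Rightarrow> real" where
  "ip_sizebiased d L N n =
     (if n \<le> N then (real L / real N) * real n * ip_w d n * ip_Z d (L - 1) (N - n) / ip_Z d L N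
      else 0)"

end

theory Submission
  imports Defs
begin

text \<open>
  With \<open>a = dL\<close> and \<open>b = N + dL - n\<close>, the Gamma-function formulas for \<open>w\<close> and \<open>Z\<close> factor
  the size-biased probability of \<open>n\<close> exactly into three pieces:
  \<open>\<Gamma>(n + d) / (\<Gamma>(1 + d) (n - 1)!)\<close>, which tends to 1 as \<open>d \<rightarrow> 0\<close>;
  the rational factor \<open>(a/b) \<Prod>j\<in>{1..<n}. (N - j)/(b + j)\<close>, which tends to \<open>\<gamma>^(n-1)/(1 + \<gamma>)^n\<close>
  because \<open>N/a \<rightarrow> \<gamma>\<close> and \<open>b/a \<rightarrow> 1 + \<gamma>\<close>;
  and \<open>\<Gamma>(a) \<Gamma>(b - d) / (\<Gamma>(a - d) \<Gamma>(b))\<close>, which tends to 1.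
  For the last one, Wendel's inequality
  \<open>(x/(x + s))^(1-s) \<le> \<Gamma>(x + s) / (\<Gamma>(x) x^s) \<le> 1\<close> for \<open>0 \<le> s \<le> 1\<close>, a consequence of the
  log-convexity of \<open>\<Gamma>\<close>, shows \<open>\<Gamma>(x + s)/\<Gamma>(x) \<sim> x^s\<close> as \<open>x \<rightarrow> \<infinity>\<close>, so the factor behaves like
  \<open>(a/b)^d \<rightarrow> 1\<close>.
\<close>

lemma Gamma_plus1_pos: "(x::real) > 0 \<Longrightarrow> Gamma (x + 1) = x * Gamma x"
  by (rule Gamma_plus1) (auto elim!: nonpos_Ints_cases)

lemma Gamma_add_le_powr:
  fixes x s :: real
  assumes x: "x > 0" and s: "0 \<le> s" "s \<le> 1"
  shows "Gamma (x + s) \<le> Gamma x * x powr s"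
proof -
  have "ln (Gamma ((1 - s) *\<^sub>R x + s *\<^sub>R (x + 1))) \<le> (1 - s) * ln (Gamma x) + s * ln (Gamma (x + 1))"
    using convex_onD[OF log_convex_Gamma_real, of s x "x + 1"] x s by simp
  also have "\<dots> = ln (Gamma x * x powr s)"
    using x by (simp only: Gamma_plus1_pos[OF x]) (simp add: ln_mult algebra_simps)
  finally show ?thesis
    using x s by (simp add: algebra_simps)
qed

lemma Gamma_add_ge_powr:
  fixes x s :: real
  assumes x: "x > 0" and s: "0 \<le> s" "s \<le> 1"
  shows "x * Gamma x \<le> Gamma (x + s) * (x + s) powr (1 - s)"
  using Gamma_add_le_powr[of "x + s" "1 - s"] x s by (simp add: Gamma_plus1_pos add.assoc)

lemma Wendel_inequality:
  fixes x s :: real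
  assumes x: "x > 0" and s: "0 \<le> s" "s \<le> 1"
  shows "(x / (x + s)) powr (1 - s) \<le> Gamma (x + s) / (Gamma x * x powr s)"
    and "Gamma (x + s) / (Gamma x * x powr s) \<le> 1"
proof -
  have pos: "Gamma x > 0" "Gamma (x + s) > 0" "x powr s > 0" "(x + s) powr (1 - s) > 0"
    using x s by auto
  have "(x / (x + s)) powr (1 - s) * (Gamma x * x powr s) = x * Gamma x / (x + s) powr (1 - s)"
    using x s pos by (simp add: powr_divide powr_diff)
  also have "\<dots> \<le> Gamma (x + s)"
    using Gamma_add_ge_powr[OF x s] pos by (simp add: divide_le_eq)
  finally show "(x / (x + s)) powr (1 - s) \<le> Gamma (x + s) / (Gamma x * x powr s)"
    using pos by (simp add: le_divide_eq)
  show "Gamma (x + s) / (Gamma x * x powr s) \<le> 1"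
    using Gamma_add_le_powr[OF x s] pos by simp
qed

lemma Gamma_add_div_powr_tendsto_1:
  fixes x s :: "'a \<Rightarrow> real"
  assumes x: "filterlim x at_top F" and s: "\<forall>\<^sub>F k in F. 0 \<le> s k \<and> s k \<le> 1"
  shows "((\<lambda>k. Gamma (x k + s k) / (Gamma (x k) * x k powr s k)) \<longlongrightarrow> 1) F"
proof (rule tendsto_sandwich)
  have x_pos: "\<forall>\<^sub>F k in F. x k > 0"
    using x by (simp add: filterlim_at_top_dense)
  have "((\<lambda>k. 1 - 1 / (1 + x k)) \<longlongrightarrow> 1 - 0) F"
    by (intro tendsto_intros tendsto_divide_0[OF tendsto_const]
        filterlim_at_top_imp_at_infinity filterlim_tendsto_add_at_top[OF tendsto_const x])
  moreover have "\<forall>\<^sub>F k in F. 1 - 1 / (1 + x k) = x k / (1 + x k)"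
    using x_pos by eventually_elim (simp add: field_simps)
  ultimately show "((\<lambda>k. x k / (1 + x k)) \<longlongrightarrow> 1) F"
    by (simp add: tendsto_cong)
  show "\<forall>\<^sub>F k in F. x k / (1 + x k) \<le> Gamma (x k + s k) / (Gamma (x k) * x k powr s k)"
    using s x_pos
  proof eventually_elim
    case (elim k)
    then have "x k / (1 + x k) \<le> x k / (x k + s k)"
      by (intro divide_left_mono) auto
    also have "\<dots> \<le> (x k / (x k + s k)) powr (1 - s k)"
      using elim powr_mono'[of "1 - s k" 1 "x k / (x k + s k)"] by simp
    also have "\<dots> \<le> Gamma (x k + s k) / (Gamma (x k) * x k powr s k)"
      using elim by (intro Wendel_inequality) auto
    finally show ?case .
  qed
  show "\<forall>\<^sub>F k in F. Gamma (x k + s k) / (Gamma (x k) * x k powr s k) \<le> 1"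
    using s x_pos
    by eventually_elim (metis Wendel_inequality(2))
qed (rule tendsto_const)

lemma Gamma_ratio_product_tendsto_1:
  fixes x y s :: "'a \<Rightarrow> real"
  assumes x: "filterlim x at_top F" and yx: "((\<lambda>k. y k / x k) \<longlongrightarrow> c) F" and c: "c > 0"
    and s: "(s \<longlongrightarrow> 0) F" "\<forall>\<^sub>F k in F. 0 \<le> s k \<and> s k \<le> 1"
  shows "((\<lambda>k. Gamma (x k + s k) / Gamma (x k) * (Gamma (y k) / Gamma (y k + s k))) \<longlongrightarrow> 1) F"
proof -
  \<comment> \<open>\<open>\<Gamma>(x + s)/\<Gamma>(x) = W x s \<cdot> x^s\<close> with \<open>W x s \<rightarrow> 1\<close>, so the product is \<open>W x s / W y s \<cdot> (x/y)^s\<close>.\<close>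
  define W where "W z t = Gamma (z + t) / (Gamma z * z powr t)" for z t :: real
  have x_pos: "\<forall>\<^sub>F k in F. x k > 0"
    using x by (simp add: filterlim_at_top_dense)
  have "filterlim (\<lambda>k. y k / x k * x k) at_top F"
    by (rule filterlim_tendsto_pos_mult_at_top[OF yx c x])
  moreover have "\<forall>\<^sub>F k in F. y k / x k * x k = y k"
    using x_pos by eventually_elim simp
  ultimately have y: "filterlim y at_top F"
    by (rule filterlim_mono_eventually[OF _ order_refl order_refl])
  have y_pos: "\<forall>\<^sub>F k in F. y k > 0"
    using y by (simp add: filterlim_at_top_dense)
  have "((\<lambda>k. W (x k) (s k) / W (y k) (s k) * (1 / (y k / x k)) powr s k) \<longlongrightarrow> 1 / 1 * (1 / c) powr 0) F"
    unfolding W_def using c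
    by (intro tendsto_intros Gamma_add_div_powr_tendsto_1 x y s yx) auto
  moreover have "\<forall>\<^sub>F k in F. W (x k) (s k) / W (y k) (s k) * (1 / (y k / x k)) powr s k
      = Gamma (x k + s k) / Gamma (x k) * (Gamma (y k) / Gamma (y k + s k))"
    using x_pos y_pos s(2)
  proof eventually_elim
    case (elim k)
    then have "Gamma (y k + s k) > 0" by simp
    with elim show ?case
      by (simp add: W_def powr_divide field_simps)
  qed
  ultimately show ?thesis
    using c by (simp add: tendsto_cong)
qed

lemma tendsto_add_divide_add:
  fixes a x y s t :: "'a \<Rightarrow> real"
  assumes a: "filterlim a at_top F"
    and x: "((\<lambda>k. x k / a k) \<longlongrightarrow> p) F" and y: "((\<lambda>k. y k / a k) \<longlongrightarrow> q) F" "q \<noteq> 0"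
    and s: "(s \<longlongrightarrow> s0) F" and t: "(t \<longlongrightarrow> t0) F"
  shows "((\<lambda>k. (x k + s k) / (y k + t k)) \<longlongrightarrow> p / q) F"
proof -
  have "((\<lambda>k. (x k / a k + s k * inverse (a k)) / (y k / a k + t k * inverse (a k)))
      \<longlongrightarrow> (p + s0 * 0) / (q + t0 * 0)) F"
    by (intro tendsto_intros x y s t tendsto_inverse_0_at_top a) (use y in simp)
  moreover have "\<forall>\<^sub>F k in F. (x k / a k + s k * inverse (a k)) / (y k / a k + t k * inverse (a k))
      = (x k + s k) / (y k + t k)"
    using a[unfolded filterlim_at_top_dense] by (auto elim!: allE[of _ 0] eventually_mono
        simp: divide_inverse[symmetric] add_divide_distrib[symmetric])
  ultimately show ?thesis
    by (simp add: tendsto_cong)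
qed

lemma tendsto_divide_self_at_top:
  fixes a :: "'a \<Rightarrow> real"
  assumes "filterlim a at_top F"
  shows "((\<lambda>k. a k / a k) \<longlongrightarrow> 1) F"
proof (rule tendsto_eventually)
  show "\<forall>\<^sub>F k in F. a k / a k = 1"
    using assms by (simp add: filterlim_at_top_dense eventually_mono[of "\<lambda>k. a k > 0"])
qed

lemma fact_eq_fact_diff_mult_prod:
  "k \<le> n \<Longrightarrow> (fact n :: 'a :: {semiring_char_0, comm_ring_1}) = fact (n - k) * (\<Prod>j<k. of_nat n - of_nat j)"
proof (induction k)
  case (Suc k)
  then have "n - k = Suc (n - Suc k)"
    by simp
  then have "fact (n - k) = (of_nat n - of_nat k) * (fact (n - Suc k) :: 'a)"
    using Suc.prems by simp
  with Suc show ?case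
    by (simp add: ac_simps)
qed simp

lemma ip_sizebiased_factorization:
  fixes D :: real and l M n :: nat
  defines "a \<equiv> D * real l" and "b \<equiv> real M + D * real l - real n"
  assumes D: "D > 0" and l: "l \<ge> 2" and n: "1 \<le> n" "n \<le> M"
  shows "ip_sizebiased D l M n =
    Gamma (real n + D) / (Gamma (D + 1) * fact (n - 1)) *
    (a / b * (\<Prod>j=1..<n. (real M - real j) / (b + real j))) *
    (Gamma a / Gamma (a - D) * (Gamma (b - D) / Gamma b))"
proof -
  have a_D: "a - D > 0" "D * real (l - 1) = a - D"
    using D l by (auto simp: a_def algebra_simps)
  have b_D: "b - D > 0" "real (M - n) + (a - D) = b - D" "real M + D * real l = b + real n"
    using a_D n by (auto simp: a_def b_def)
  have b_pos: "b > 0" and M_pos: "real M > 0"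
    using b_D D n by auto
  have prod_split_first: "(\<Prod>j<n. f j) = f 0 * (\<Prod>j=1..<n. f j)" for f :: "nat \<Rightarrow> real"
    using n by (simp add: atLeast0LessThan[symmetric] prod.atLeast_Suc_lessThan)
  have Gamma_b: "Gamma (b + real n) = Gamma b * (b * (\<Prod>j=1..<n. b + real j))"
  proof -
    have "b \<notin> \<int>\<^sub>\<le>\<^sub>0"
      using b_pos by (auto elim!: nonpos_Ints_cases)
    then show ?thesis
      using pochhammer_Gamma[of b n] Gamma_real_pos[OF b_pos]
      by (simp add: pochhammer_prod atLeast0LessThan prod_split_first[of "\<lambda>j. b + real j"] field_simps)
  qed
  have fact_M: "(fact M :: real) = fact (M - n) * (real M * (\<Prod>j=1..<n. real M - real j))"
    using fact_eq_fact_diff_mult_prod[OF n(2), where 'a=real] prod_split_first[of "\<lambda>j. real M - real j"] by simp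
  have fact_n: "(fact n :: real) = real n * fact (n - 1)"
    using n fact_reduce[of n] by simp
  have Gamma_D: "Gamma (D + 1) = D * Gamma D"
    using D by (rule Gamma_plus1_pos)
  have l_eq: "real l = a / D"
    using D by (simp add: a_def)
  have nonzero: "Gamma (a - D) \<noteq> 0" "Gamma b \<noteq> 0" "Gamma D \<noteq> 0" "(\<Prod>j=1..<n. b + real j) \<noteq> 0"
    using a_D b_pos D by (auto intro: prod_pos simp: order.strict_implies_not_eq[symmetric])
  have Z_l: "ip_Z D l M = Gamma b * (b * (\<Prod>j=1..<n. b + real j)) /
      (fact (M - n) * (real M * (\<Prod>j=1..<n. real M - real j)) * Gamma a)"
    unfolding ip_Z_def b_D(3) Gamma_b fact_M a_def ..
  have Z_l1: "ip_Z D (l - 1) (M - n) = Gamma (b - D) / (fact (M - n) * Gamma (a - D))"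
    unfolding ip_Z_def a_D(2) b_D(2) ..
  have "ip_sizebiased D l M n = a / (D * real M) * real n *
      (Gamma (real n + D) / (real n * fact (n - 1) * Gamma D)) *
      ip_Z D (l - 1) (M - n) / ip_Z D l M"
    using n by (simp add: ip_sizebiased_def ip_w_def fact_n l_eq)
  then show ?thesis
    unfolding Z_l Z_l1 Gamma_D
    using nonzero b_pos M_pos D n by (simp add: prod_dividef field_simps)
qed

lemma Gamma_add_div_fact_tendsto_1:
  fixes D :: "'a \<Rightarrow> real"
  assumes D: "(D \<longlongrightarrow> 0) F" and n: "n \<ge> 1"
  shows "((\<lambda>k. Gamma (real n + D k) / (Gamma (D k + 1) * fact (n - 1))) \<longlongrightarrow> 1) F"
proof -
  have "((\<lambda>k. Gamma (real n + D k) / (Gamma (D k + 1) * fact (n - 1))) \<longlongrightarrow>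
      Gamma (real n + 0) / (Gamma (0 + 1) * fact (n - 1))) F"
    using n by (intro tendsto_intros D) (auto elim!: nonpos_Ints_cases)
  moreover have "Gamma (real n) = fact (n - 1)"
    using Gamma_fact[of "n - 1", where 'a = real] n by simp
  ultimately show ?thesis
    by simp
qed

lemma geometric_factor_tendsto:
  fixes a b :: "'a \<Rightarrow> real" and M :: "'a \<Rightarrow> nat"
  assumes a: "filterlim a at_top F"
    and M: "((\<lambda>k. real (M k) / a k) \<longlongrightarrow> \<gamma>) F" and b: "((\<lambda>k. b k / a k) \<longlongrightarrow> 1 + \<gamma>) F"
    and \<gamma>: "\<gamma> \<ge> 0" and n: "n \<ge> 1"
  shows "((\<lambda>k. a k / b k * (\<Prod>j=1..<n. (real (M k) - real j) / (b k + real j))) \<longlongrightarrow>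
      \<gamma> ^ (n - 1) / (1 + \<gamma>) ^ n) F"
proof -
  have \<gamma>1: "1 + \<gamma> \<noteq> 0"
    using \<gamma> by simp
  have "((\<lambda>k. (a k + 0) / (b k + 0)) \<longlongrightarrow> 1 / (1 + \<gamma>)) F"
    by (rule tendsto_add_divide_add[OF a tendsto_divide_self_at_top[OF a] b \<gamma>1 tendsto_const tendsto_const])
  moreover have "((\<lambda>k. (real (M k) + - real j) / (b k + real j)) \<longlongrightarrow> \<gamma> / (1 + \<gamma>)) F" for j
    by (rule tendsto_add_divide_add[OF a M b \<gamma>1 tendsto_const tendsto_const])
  ultimately have "((\<lambda>k. (a k + 0) / (b k + 0) *
      (\<Prod>j=1..<n. (real (M k) + - real j) / (b k + real j))) \<longlongrightarrow>
      1 / (1 + \<gamma>) * (\<Prod>j=1..<n. \<gamma> / (1 + \<gamma>))) F"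
    by (intro tendsto_mult tendsto_prod)
  then show ?thesis
    using n by (simp add: power_divide power_commutes flip: power_Suc)
qed

lemma Gamma_quotient_factor_tendsto_1:
  fixes a b D :: "'a \<Rightarrow> real"
  assumes a: "filterlim a at_top F" and b: "((\<lambda>k. b k / a k) \<longlongrightarrow> c) F" "c > 0"
    and D: "(D \<longlongrightarrow> 0) F" "\<forall>\<^sub>F k in F. 0 \<le> D k \<and> D k \<le> 1"
  shows "((\<lambda>k. Gamma (a k) / Gamma (a k - D k) * (Gamma (b k - D k) / Gamma (b k))) \<longlongrightarrow> 1) F"
proof -
  have "((\<lambda>k. Gamma (a k - D k + D k) / Gamma (a k - D k) *
      (Gamma (b k - D k) / Gamma (b k - D k + D k))) \<longlongrightarrow> 1) F"
  proof (rule Gamma_ratio_product_tendsto_1)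
    show "filterlim (\<lambda>k. a k - D k) at_top F"
      using filterlim_tendsto_add_at_top[OF tendsto_minus[OF D(1)] a] by simp
    show "((\<lambda>k. (b k - D k) / (a k - D k)) \<longlongrightarrow> c) F"
      using tendsto_add_divide_add[OF a b(1) tendsto_divide_self_at_top[OF a] _
          tendsto_minus[OF D(1)] tendsto_minus[OF D(1)]]
      by simp
  qed (use b(2) D in simp_all)
  then show ?thesis
    by simp
qed

lemma ip_sizebiased_tendsto_geometric:
  fixes D :: "'a \<Rightarrow> real" and l M :: "'a \<Rightarrow> nat"
  assumes D: "(D \<longlongrightarrow> 0) F" "\<forall>\<^sub>F k in F. D k > 0"
    and a: "filterlim (\<lambda>k. D k * real (l k)) at_top F"
    and M: "((\<lambda>k. real (M k) / (D k * real (l k))) \<longlongrightarrow> \<gamma>) F" and \<gamma>: "\<gamma> \<ge> 0"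
    and n: "1 \<le> n" "\<forall>\<^sub>F k in F. n \<le> M k"
  shows "((\<lambda>k. ip_sizebiased (D k) (l k) (M k) n) \<longlongrightarrow> \<gamma> ^ (n - 1) / (1 + \<gamma>) ^ n) F"
proof -
  define a where "a k = D k * real (l k)" for k
  define b where "b k = real (M k) + a k - real n" for k
  have a': "filterlim a at_top F" and M': "((\<lambda>k. real (M k) / a k) \<longlongrightarrow> \<gamma>) F"
    using a M by (simp_all add: a_def[abs_def])
  have a_large: "\<forall>\<^sub>F k in F. a k > 2"
    using a' by (simp add: filterlim_at_top_dense)
  then have a_nonzero: "\<forall>\<^sub>F k in F. a k \<noteq> 0"
    by eventually_elim simp
  have b_a: "((\<lambda>k. b k / a k) \<longlongrightarrow> 1 + \<gamma>) F"
  proof -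
    have "((\<lambda>k. real (M k) / a k + 1 - real n * inverse (a k)) \<longlongrightarrow> \<gamma> + 1 - real n * 0) F"
      by (intro tendsto_intros tendsto_inverse_0_at_top M' a')
    moreover have "\<forall>\<^sub>F k in F. real (M k) / a k + 1 - real n * inverse (a k) = b k / a k"
      using a_nonzero by eventually_elim (simp add: b_def field_simps)
    ultimately show ?thesis
      by (simp add: tendsto_cong add.commute)
  qed
  have \<gamma>1: "1 + \<gamma> > 0"
    using \<gamma> by simp
  have D_small: "\<forall>\<^sub>F k in F. D k < 1"
    using D(1) by (rule order_tendstoD) simp
  have D_unit: "\<forall>\<^sub>F k in F. 0 \<le> D k \<and> D k \<le> 1"
    using D(2) D_small by eventually_elim simp
  note lim1 = Gamma_add_div_fact_tendsto_1[OF D(1) n(1)]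
  note lim2 = geometric_factor_tendsto[OF a' M' b_a \<gamma> n(1)]
  note lim3 = Gamma_quotient_factor_tendsto_1[OF a' b_a \<gamma>1 D(1) D_unit]
  have "\<forall>\<^sub>F k in F. ip_sizebiased (D k) (l k) (M k) n =
      Gamma (real n + D k) / (Gamma (D k + 1) * fact (n - 1)) *
      (a k / b k * (\<Prod>j=1..<n. (real (M k) - real j) / (b k + real j))) *
      (Gamma (a k) / Gamma (a k - D k) * (Gamma (b k - D k) / Gamma (b k)))"
    using D(2) D_small a_large n(2)
  proof eventually_elim
    case (elim k)
    have "D k * real (l k) \<le> real (l k)"
      using elim by (intro mult_left_le_one_le) auto
    then have "l k \<ge> 2"
      using elim by (simp add: a_def)
    with elim n(1) show ?case
      unfolding a_def b_def by (intro ip_sizebiased_factorization) simp_all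
  qed
  with tendsto_mult[OF tendsto_mult[OF lim1 lim2] lim3] show ?thesis
    by (simp add: tendsto_cong)
qed

theorem lemma4p1:
  fixes L N :: "nat \<Rightarrow> nat" and d :: "nat \<Rightarrow> real" and \<gamma> :: real and n :: nat
  assumes d_pos: "\<And>l. d l > 0"
    and L_inf: "filterlim L at_top sequentially"
    and N_inf: "filterlim N at_top sequentially"
    and N_over_L: "(\<lambda>k. real (N k) / real (L k)) \<longlonglongrightarrow> 0"
    and d_zero: "(d \<longlongrightarrow> 0) at_top"
    and dL_inf: "filterlim (\<lambda>l. d l * real l) at_top at_top"
    and gamma_nonneg: "\<gamma> \<ge> 0"
    and N_over_dL: "(\<lambda>k. real (N k) / (d (L k) * real (L k))) \<longlonglongrightarrow> \<gamma>"
    and n_pos: "n \<ge> 1"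
  shows "(\<lambda>k. ip_sizebiased (d (L k)) (L k) (N k) n) \<longlonglongrightarrow> \<gamma> ^ (n - 1) / (1 + \<gamma>) ^ n"
proof (rule ip_sizebiased_tendsto_geometric[OF _ _ _ N_over_dL gamma_nonneg n_pos])
  show "(\<lambda>k. d (L k)) \<longlonglongrightarrow> 0"
    using filterlim_compose[OF d_zero L_inf] .
  show "filterlim (\<lambda>k. d (L k) * real (L k)) at_top sequentially"
    using filterlim_compose[OF dL_inf L_inf] .
  show "\<forall>\<^sub>F k in sequentially. n \<le> N k"
    using N_inf by (simp add: filterlim_at_top)
qed (simp add: d_pos)

end
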